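(* Let $n, d, d_k, m \ge 1$ and fix deterministic parameters $W_Q, W_K \in \mathbb{R}^{d\times d_k}$, $W_V \in \mathbb{R}^{d\times d}$, $W_1 \in \mathbb{R}^{m\times d}$, $b_1\in\mathbb{R}^m$, $W_2\in\mathbb{R}^{d\times m}$, $b_2\in\mathbb{R}^d$. For $x\in\mathbb{R}^{n\times d}$ let $\mathrm{Attn}(x) = \mathrm{softmax}\big((xW_Q)(xW_K)^\top/\sqrt{d_k}\big)\, x W_V$ (row-wise softmax), and for $y \in \mathbb{R}^d$ let $\mathrm{FFN}(y) = W_2\,\phi(W_1 y + b_1) + b_2$ where the GELU nonlinearity is replaced by its linearization $\phi(u) = \tfrac12 u$ (applied entrywise). Let $h^{(0)}\in\mathbb{R}^{n\times d}$ have independent rows $h^{(0)}_t \sim N(0,\sigma^2 I_d)$, let $\tilde h^{(0)} = h^{(0)} + \mathrm{Attn}(h^{(0)})$, and define the Transformer update for token $t$ by $F_{\mathrm{Trans},t} = \mathrm{Attn}(h^{(0)})_t + \mathrm{FFN}(\tilde h^{(0)}_t)$ (rows viewed as column vectors). Then for every $t$, $$\mu_{F,\mathrm{Trans}} := \mathbb{E}[F_{\mathrm{Trans},t}] = \tfrac12 W_2 b_1 + b_2.$$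
   Context: This is a one-layer Transformer block without layer normalization: $h^{(1)} = h^{(0)} + \mathrm{Attn}(h^{(0)}) + \mathrm{FFN}(h^{(0)}+\mathrm{Attn}(h^{(0)}))$, with FFN applied token-wise. Row-wise softmax: $\mathrm{softmax}(S)_{ij} = e^{S_{ij}}/\sum_k e^{S_{ik}}$. The paper's standing convention replaces $\mathrm{GELU}(u)$ by its first-order approximation $\tfrac12 u$. *)

theory Defs
  imports "HOL-Probability.Probability"
begin

text \<open>Matrices are functions nat => nat => real with explicit dimensions;
  x is n x d (token t, feature j). Vectors are nat => real.\<close>

definition attn_score ::
  "nat \<Rightarrow> nat \<Rightarrow> (nat \<Rightarrow> nat \<Rightarrow> real) \<Rightarrow> (nat \<Rightarrow> nat \<Rightarrow> real)
   \<Rightarrow> (nat \<Rightarrow> nat \<Rightarrow> real) \<Rightarrow> nat \<Rightarrow> nat \<Rightarrow> real" where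
  "attn_score d dk WQ WK x t s =
     (\<Sum>k<dk. (\<Sum>j<d. x t j * WQ j k) * (\<Sum>j<d. x s j * WK j k)) / sqrt (real dk)"

definition attn_weights ::
  "nat \<Rightarrow> nat \<Rightarrow> nat \<Rightarrow> (nat \<Rightarrow> nat \<Rightarrow> real) \<Rightarrow> (nat \<Rightarrow> nat \<Rightarrow> real)
   \<Rightarrow> (nat \<Rightarrow> nat \<Rightarrow> real) \<Rightarrow> nat \<Rightarrow> nat \<Rightarrow> real" where
  "attn_weights n d dk WQ WK x t s =
     exp (attn_score d dk WQ WK x t s) / (\<Sum>r<n. exp (attn_score d dk WQ WK x t r))"

definition Attn ::
  "nat \<Rightarrow> nat \<Rightarrow> nat \<Rightarrow> (nat \<Rightarrow> nat \<Rightarrow> real) \<Rightarrow> (nat \<Rightarrow> nat \<Rightarrow> real)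
   \<Rightarrow> (nat \<Rightarrow> nat \<Rightarrow> real) \<Rightarrow> (nat \<Rightarrow> nat \<Rightarrow> real) \<Rightarrow> nat \<Rightarrow> nat \<Rightarrow> real" where
  "Attn n d dk WQ WK WV x t j =
     (\<Sum>s<n. attn_weights n d dk WQ WK x t s * (\<Sum>i<d. x s i * WV i j))"

definition phi_lin :: "real \<Rightarrow> real" where
  "phi_lin u = u / 2"

definition FFN ::
  "nat \<Rightarrow> nat \<Rightarrow> (nat \<Rightarrow> nat \<Rightarrow> real) \<Rightarrow> (nat \<Rightarrow> real) \<Rightarrow> (nat \<Rightarrow> nat \<Rightarrow> real)
   \<Rightarrow> (nat \<Rightarrow> real) \<Rightarrow> (nat \<Rightarrow> real) \<Rightarrow> nat \<Rightarrow> real" where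
  "FFN d m W1 b1 W2 b2 y i =
     (\<Sum>l<m. W2 i l * phi_lin ((\<Sum>j<d. W1 l j * y j) + b1 l)) + b2 i"

definition F_trans ::
  "nat \<Rightarrow> nat \<Rightarrow> nat \<Rightarrow> nat \<Rightarrow> (nat \<Rightarrow> nat \<Rightarrow> real) \<Rightarrow> (nat \<Rightarrow> nat \<Rightarrow> real)
   \<Rightarrow> (nat \<Rightarrow> nat \<Rightarrow> real) \<Rightarrow> (nat \<Rightarrow> nat \<Rightarrow> real) \<Rightarrow> (nat \<Rightarrow> real)
   \<Rightarrow> (nat \<Rightarrow> nat \<Rightarrow> real) \<Rightarrow> (nat \<Rightarrow> real)
   \<Rightarrow> (nat \<Rightarrow> nat \<Rightarrow> real) \<Rightarrow> nat \<Rightarrow> nat \<Rightarrow> real" where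
  "F_trans n d dk m WQ WK WV W1 b1 W2 b2 x t i =
     Attn n d dk WQ WK WV x t i
     + FFN d m W1 b1 W2 b2 (\<lambda>j. x t j + Attn n d dk WQ WK WV x t j) i"

definition gauss_iso :: "nat \<Rightarrow> real \<Rightarrow> (nat \<Rightarrow> real) measure" where
  "gauss_iso d \<sigma> = PiM {..<d} (\<lambda>_. density lborel (normal_density 0 \<sigma>))"

end

theory Submission
  imports Defs
begin

text \<open>The score matrix is a bilinear form in the input, so negating every token leaves the
  softmax weights unchanged and negates the attention output; the linearised FFN is affine.
  Hence F(-x) + F(x) = 2 (W2 b1 / 2 + b2) pointwise. The Gaussian input is centred, so its
  law is invariant under x \<mapsto> -x, and averaging the identity gives the expectation.
  Integrability holds because the softmax weights lie in [0, 1], so the attention output is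
  dominated by sums of absolute values of Gaussian entries.\<close>

lemma (in prob_space) integral_eq_centre_of_symmetry:
  fixes f :: "'a \<Rightarrow> real"
  assumes g: "g \<in> M \<rightarrow>\<^sub>M M" "distr M M g = M"
    and f: "integrable M f"
    and sym: "\<And>x. x \<in> space M \<Longrightarrow> f (g x) + f x = 2 * c"
  shows "integral\<^sup>L M f = c"
proof -
  have "integral\<^sup>L M f = integral\<^sup>L (distr M M g) f"
    using g(2) by simp
  also have "\<dots> = integral\<^sup>L M (\<lambda>x. f (g x))"
    using f by (intro integral_distr[OF g(1)]) simp
  also have "\<dots> = integral\<^sup>L M (\<lambda>x. 2 * c - f x)"
    using sym by (intro Bochner_Integration.integral_cong) (auto simp: eq_diff_eq)
  also have "\<dots> = 2 * c - integral\<^sup>L M f"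
    using f by (simp add: prob_space)
  finally show ?thesis by simp
qed

lemma distr_density_lborel_uminus_even:
  fixes f :: "real \<Rightarrow> ennreal"
  assumes [measurable]: "f \<in> borel_measurable borel" and even: "\<And>x. f (- x) = f x"
  shows "distr (density lborel f) (density lborel f) uminus = density lborel f"
proof -
  have "density lborel f = density (distr lborel borel uminus) f"
    by (simp add: lborel_distr_uminus)
  also have "\<dots> = distr (density lborel (\<lambda>x. f (- x))) borel uminus"
    by (rule density_distr) auto
  also have "\<dots> = distr (density lborel f) (density lborel f) uminus"
    by (intro distr_cong) (auto simp: even)
  finally show ?thesis by simp
qed

lemma distr_PiM_compose_invariant:
  assumes "finite I" "\<And>i. i \<in> I \<Longrightarrow> prob_space (M i)"
    and "\<And>i. i \<in> I \<Longrightarrow> f \<in> M i \<rightarrow>\<^sub>M M i" "\<And>i. i \<in> I \<Longrightarrow> distr (M i) (M i) f = M i"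
  shows "distr (PiM I M) (PiM I M) (compose I f) = PiM I M"
  using assms by (subst distr_PiM_finite_prob_space') (auto intro: PiM_cong)

lemma integrable_PiM_component:
  fixes f :: "'b \<Rightarrow> 'c::{banach, second_countable_topology}"
  assumes "\<And>i. i \<in> I \<Longrightarrow> prob_space (M i)" "i \<in> I" "integrable (M i) f"
  shows "integrable (PiM I M) (\<lambda>y. f (y i))"
proof -
  have "integrable (distr (PiM I M) (M i) (\<lambda>y. y i)) f"
    using assms by (simp add: distr_PiM_component)
  then show ?thesis
    using assms by (subst (asm) integrable_distr_eq) auto
qed

lemma (in prob_space) distr_indep_vars_eq_PiM:
  assumes "I \<noteq> {}" "indep_vars N X I" "\<And>i. i \<in> I \<Longrightarrow> distr M (N i) (X i) = D i"
  shows "distr M (PiM I N) (\<lambda>\<omega>. \<lambda>i\<in>I. X i \<omega>) = PiM I D"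
proof -
  have "\<And>i. i \<in> I \<Longrightarrow> random_variable (N i) (X i)"
    using assms(2) unfolding indep_vars_def by blast
  then have "distr M (PiM I N) (\<lambda>\<omega>. \<lambda>i\<in>I. X i \<omega>) = PiM I (\<lambda>i. distr M (N i) (X i))"
    using assms(1,2) by (subst indep_vars_iff_distr_eq_PiM'[symmetric])
  also have "\<dots> = PiM I D"
    using assms(3) by (intro PiM_cong) auto
  finally show ?thesis .
qed

lemma measurable_PiM_entry [measurable]:
  "(\<lambda>y. y s j) \<in> borel_measurable (PiM I (\<lambda>_. PiM J (\<lambda>_. borel :: real measure)))"
proof (cases "s \<in> I \<and> j \<in> J")
  case True
  then show ?thesis
    using measurable_compose[OF measurable_component_singleton[of s I] measurable_component_singleton[of j J]]
    by simp
next
  case False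
  \<comment> \<open>points of a product space take the value \<open>undefined\<close> outside the index set\<close>
  then have "y s j = (if s \<in> I then undefined else undefined j)"
    if "y \<in> space (PiM I (\<lambda>_. PiM J (\<lambda>_. borel :: real measure)))" for y
    using that by (auto simp: space_PiM PiE_def extensional_def)
  then show ?thesis
    by (subst measurable_cong[where g = "\<lambda>_. if s \<in> I then undefined else undefined j"]) auto
qed

lemma prob_space_gauss_iso: "0 < \<sigma> \<Longrightarrow> prob_space (gauss_iso d \<sigma>)"
  unfolding gauss_iso_def by (intro prob_space_PiM prob_space_normal_density)

lemma sets_gauss_iso: "sets (gauss_iso d \<sigma>) = sets (PiM {..<d} (\<lambda>_. borel))"
  unfolding gauss_iso_def by (intro sets_PiM_cong) auto

lemma gauss_iso_distr_uminus:
  assumes "0 < \<sigma>"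
  shows "distr (gauss_iso d \<sigma>) (gauss_iso d \<sigma>) (compose {..<d} uminus) = gauss_iso d \<sigma>"
proof -
  have "normal_density 0 \<sigma> (- x) = normal_density 0 \<sigma> x" for x
    by (simp add: normal_density_def)
  then show ?thesis
    unfolding gauss_iso_def using assms
    by (intro distr_PiM_compose_invariant distr_density_lborel_uminus_even)
      (auto intro: prob_space_normal_density)
qed

lemma integrable_gauss_iso_component:
  assumes "0 < \<sigma>" "j < d"
  shows "integrable (gauss_iso d \<sigma>) (\<lambda>z. z j)"
proof -
  have "integrable (density lborel (normal_density 0 \<sigma>)) (\<lambda>x. x)"
    using assms by (subst integrable_density) (auto intro: integrable_normal_moment_nz_1)
  then show ?thesis
    unfolding gauss_iso_def using assms
    by (intro integrable_PiM_component[where f = "\<lambda>x. x"]) (auto intro: prob_space_normal_density)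
qed

lemma sets_PiM_gauss_iso:
  "sets (PiM I (\<lambda>_. gauss_iso d \<sigma>)) = sets (PiM I (\<lambda>_. PiM {..<d} (\<lambda>_. borel)))"
  by (intro sets_PiM_cong refl sets_gauss_iso)

lemma integrable_PiM_gauss_iso_entry:
  assumes "0 < \<sigma>" "s \<in> I" "j < d"
  shows "integrable (PiM I (\<lambda>_. gauss_iso d \<sigma>)) (\<lambda>y. y s j)"
  using assms
  by (intro integrable_PiM_component[where f = "\<lambda>z. z j"] prob_space_gauss_iso integrable_gauss_iso_component)

lemma PiM_gauss_iso_distr_uminus:
  assumes "0 < \<sigma>" "finite I"
  shows "distr (PiM I (\<lambda>_. gauss_iso d \<sigma>)) (PiM I (\<lambda>_. gauss_iso d \<sigma>)) (compose I (compose {..<d} uminus))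
    = PiM I (\<lambda>_. gauss_iso d \<sigma>)"
proof (intro distr_PiM_compose_invariant assms prob_space_gauss_iso gauss_iso_distr_uminus)
  show "compose {..<d} uminus \<in> gauss_iso d \<sigma> \<rightarrow>\<^sub>M gauss_iso d \<sigma>"
    unfolding measurable_cong_sets[OF sets_gauss_iso sets_gauss_iso] compose_def by measurable
qed

lemma attn_score_uminus:
  "attn_score d dk WQ WK (\<lambda>s j. - x s j) t s = attn_score d dk WQ WK x t s"
  unfolding attn_score_def by (simp add: sum_negf)

lemma attn_weights_uminus:
  "attn_weights n d dk WQ WK (\<lambda>s j. - x s j) t s = attn_weights n d dk WQ WK x t s"
  unfolding attn_weights_def by (simp only: attn_score_uminus)

lemma Attn_uminus:
  "Attn n d dk WQ WK WV (\<lambda>s j. - x s j) t j = - Attn n d dk WQ WK WV x t j"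
  unfolding Attn_def by (simp add: attn_weights_uminus sum_negf)

lemma FFN_uminus_add:
  "FFN d m W1 b1 W2 b2 (\<lambda>j. - y j) i + FFN d m W1 b1 W2 b2 y i
     = (\<Sum>l<m. W2 i l * b1 l) + 2 * b2 i"
proof -
  have "W2 i l * phi_lin ((\<Sum>j<d. W1 l j * - y j) + b1 l) + W2 i l * phi_lin ((\<Sum>j<d. W1 l j * y j) + b1 l)
      = W2 i l * b1 l" for l
    by (simp add: phi_lin_def sum_negf field_simps)
  then show ?thesis
    unfolding FFN_def by (simp add: sum.distrib[symmetric])
qed

lemma F_trans_uminus_add:
  "F_trans n d dk m WQ WK WV W1 b1 W2 b2 (\<lambda>s j. - x s j) t i + F_trans n d dk m WQ WK WV W1 b1 W2 b2 x t i
     = (\<Sum>l<m. W2 i l * b1 l) + 2 * b2 i"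
  using FFN_uminus_add[of d m W1 b1 W2 b2 "\<lambda>j. x t j + Attn n d dk WQ WK WV x t j" i]
  unfolding F_trans_def by (simp add: Attn_uminus)

lemma Attn_cong:
  assumes "\<And>s j. s < n \<Longrightarrow> j < d \<Longrightarrow> x s j = x' s j" "t < n"
  shows "Attn n d dk WQ WK WV x t i = Attn n d dk WQ WK WV x' t i"
  using assms unfolding Attn_def attn_weights_def attn_score_def
  by (intro sum.cong arg_cong2[where f = "(*)"] arg_cong2[where f = "(/)"] arg_cong[where f = exp]) auto

lemma F_trans_cong:
  assumes "\<And>s j. s < n \<Longrightarrow> j < d \<Longrightarrow> x s j = x' s j" "t < n"
  shows "F_trans n d dk m WQ WK WV W1 b1 W2 b2 x t i = F_trans n d dk m WQ WK WV W1 b1 W2 b2 x' t i"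
  using assms Attn_cong[OF assms] unfolding F_trans_def FFN_def
  by (intro sum.cong arg_cong2[where f = "(+)"] arg_cong2[where f = "(*)"] arg_cong[where f = phi_lin]) auto

lemma attn_weights_nonneg: "0 \<le> attn_weights n d dk WQ WK x t s"
  unfolding attn_weights_def by (simp add: sum_nonneg)

lemma attn_weights_le_1:
  assumes "s < n"
  shows "attn_weights n d dk WQ WK x t s \<le> 1"
proof -
  let ?e = "\<lambda>r. exp (attn_score d dk WQ WK x t r)"
  have "?e s \<le> (\<Sum>r<n. ?e r)"
    using assms by (intro member_le_sum) auto
  moreover have "0 < (\<Sum>r<n. ?e r)"
    using assms by (intro sum_pos) auto
  ultimately show ?thesis
    unfolding attn_weights_def by (simp add: divide_le_eq_1)
qed

lemma abs_Attn_le: "\<bar>Attn n d dk WQ WK WV x t j\<bar> \<le> (\<Sum>s<n. \<bar>\<Sum>k<d. x s k * WV k j\<bar>)"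
proof -
  have "\<bar>Attn n d dk WQ WK WV x t j\<bar> \<le> (\<Sum>s<n. \<bar>attn_weights n d dk WQ WK x t s * (\<Sum>k<d. x s k * WV k j)\<bar>)"
    unfolding Attn_def by (rule sum_abs)
  also have "\<dots> \<le> (\<Sum>s<n. \<bar>\<Sum>k<d. x s k * WV k j\<bar>)"
    by (intro sum_mono)
      (simp add: abs_mult mult_left_le_one_le attn_weights_nonneg attn_weights_le_1)
  finally show ?thesis .
qed

lemma measurable_Attn [measurable]:
  "(\<lambda>y. Attn n d dk WQ WK WV y t j) \<in> borel_measurable (PiM I (\<lambda>_. PiM J (\<lambda>_. borel)))"
  unfolding Attn_def attn_weights_def attn_score_def by measurable

lemma measurable_F_trans [measurable]:
  "(\<lambda>y. F_trans n d dk m WQ WK WV W1 b1 W2 b2 y t i) \<in> borel_measurable (PiM I (\<lambda>_. PiM J (\<lambda>_. borel)))"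
  unfolding F_trans_def FFN_def phi_lin_def by measurable

lemma integrable_Attn:
  fixes P :: "(nat \<Rightarrow> nat \<Rightarrow> real) measure"
  assumes sets_P: "sets P = sets (PiM I (\<lambda>_. PiM J (\<lambda>_. borel)))"
    and entries: "\<And>s k. s < n \<Longrightarrow> k < d \<Longrightarrow> integrable P (\<lambda>y. y s k)"
  shows "integrable P (\<lambda>y. Attn n d dk WQ WK WV y t j)"
proof (rule Bochner_Integration.integrable_bound)
  show "integrable P (\<lambda>y. \<Sum>s<n. \<bar>\<Sum>k<d. y s k * WV k j\<bar>)"
    using entries by (intro Bochner_Integration.integrable_sum integrable_abs integrable_mult_left) auto
  show "(\<lambda>y. Attn n d dk WQ WK WV y t j) \<in> borel_measurable P"
    unfolding measurable_cong_sets[OF sets_P refl] by measurable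
  show "AE y in P. norm (Attn n d dk WQ WK WV y t j) \<le> norm (\<Sum>s<n. \<bar>\<Sum>k<d. y s k * WV k j\<bar>)"
    using abs_Attn_le by (intro AE_I2) (simp add: sum_nonneg)
qed

lemma integrable_F_trans:
  fixes P :: "(nat \<Rightarrow> nat \<Rightarrow> real) measure"
  assumes "prob_space P"
    and "sets P = sets (PiM I (\<lambda>_. PiM J (\<lambda>_. borel)))"
    and "\<And>s k. s < n \<Longrightarrow> k < d \<Longrightarrow> integrable P (\<lambda>y. y s k)"
    and "t < n"
  shows "integrable P (\<lambda>y. F_trans n d dk m WQ WK WV W1 b1 W2 b2 y t i)"
proof -
  interpret prob_space P by fact
  show ?thesis
    unfolding F_trans_def FFN_def phi_lin_def using assms(2-)
    by (intro Bochner_Integration.integrable_add Bochner_Integration.integrable_sum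
        integrable_mult_right integrable_divide_zero integrable_const integrable_Attn)
      auto
qed

lemma integral_F_trans_of_symmetric:
  fixes P :: "(nat \<Rightarrow> nat \<Rightarrow> real) measure"
  assumes "prob_space P"
    and sets_P: "sets P = sets (PiM {..<n} (\<lambda>_. PiM {..<d} (\<lambda>_. borel)))"
    and entries: "\<And>s k. s < n \<Longrightarrow> k < d \<Longrightarrow> integrable P (\<lambda>y. y s k)"
    and sym: "distr P P (compose {..<n} (compose {..<d} uminus)) = P"
    and "t < n"
  shows "(\<integral>y. F_trans n d dk m WQ WK WV W1 b1 W2 b2 y t i \<partial>P) = (1/2) * (\<Sum>l<m. W2 i l * b1 l) + b2 i"
proof -
  interpret P: prob_space P by fact
  have neg: "compose {..<n} (compose {..<d} uminus) \<in> P \<rightarrow>\<^sub>M P"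
    unfolding measurable_cong_sets[OF sets_P sets_P] compose_def by measurable
  show ?thesis
  proof (rule P.integral_eq_centre_of_symmetry[OF neg sym])
    show "integrable P (\<lambda>y. F_trans n d dk m WQ WK WV W1 b1 W2 b2 y t i)"
      using assms by (intro integrable_F_trans)
  next
    fix y
    have "F_trans n d dk m WQ WK WV W1 b1 W2 b2 (compose {..<n} (compose {..<d} uminus) y) t i
        = F_trans n d dk m WQ WK WV W1 b1 W2 b2 (\<lambda>s j. - y s j) t i"
      using \<open>t < n\<close> by (intro F_trans_cong) (auto simp: compose_def)
    then show "F_trans n d dk m WQ WK WV W1 b1 W2 b2 (compose {..<n} (compose {..<d} uminus) y) t i
        + F_trans n d dk m WQ WK WV W1 b1 W2 b2 y t i = 2 * ((1/2) * (\<Sum>l<m. W2 i l * b1 l) + b2 i)"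
      by (simp add: F_trans_uminus_add)
  qed
qed

theorem theorem1:
  fixes n d dk m :: nat and \<sigma> :: real
    and WQ WK WV W1 W2 :: "nat \<Rightarrow> nat \<Rightarrow> real" and b1 b2 :: "nat \<Rightarrow> real"
    and M :: "'a measure" and h :: "'a \<Rightarrow> nat \<Rightarrow> nat \<Rightarrow> real"
  assumes "n \<ge> 1" "d \<ge> 1" "dk \<ge> 1" "m \<ge> 1" "\<sigma> > 0"
    and "prob_space M"
    and "prob_space.indep_vars M (\<lambda>_. PiM {..<d} (\<lambda>_. borel))
           (\<lambda>t \<omega>. \<lambda>j\<in>{..<d}. h \<omega> t j) {..<n}"
    and "\<And>t. t < n \<Longrightarrow> distr M (PiM {..<d} (\<lambda>_. borel)) (\<lambda>\<omega>. \<lambda>j\<in>{..<d}. h \<omega> t j)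
                              = gauss_iso d \<sigma>"
    and "t < n" and "i < d"
  shows "integrable M (\<lambda>\<omega>. F_trans n d dk m WQ WK WV W1 b1 W2 b2 (h \<omega>) t i)
       \<and> (\<integral>\<omega>. F_trans n d dk m WQ WK WV W1 b1 W2 b2 (h \<omega>) t i \<partial>M)
           = (1/2) * (\<Sum>l<m. W2 i l * b1 l) + b2 i"
proof -
  interpret prob_space M by fact
  let ?N = "PiM {..<n} (\<lambda>_. PiM {..<d} (\<lambda>_. borel :: real measure))"
  let ?P = "PiM {..<n} (\<lambda>_. gauss_iso d \<sigma>)"
  let ?F = "\<lambda>y. F_trans n d dk m WQ WK WV W1 b1 W2 b2 y t i"
  define Y where "Y = (\<lambda>\<omega>. \<lambda>t\<in>{..<n}. \<lambda>j\<in>{..<d}. h \<omega> t j)"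
  have Y: "Y \<in> M \<rightarrow>\<^sub>M ?N"
    unfolding Y_def by (rule measurable_restrict) (use assms(7) in \<open>unfold indep_vars_def, blast\<close>)
  have law: "distr M ?N Y = ?P"
    unfolding Y_def using assms(1,7,8) by (intro distr_indep_vars_eq_PiM) (auto simp: lessThan_empty_iff)
  have F_Y: "F_trans n d dk m WQ WK WV W1 b1 W2 b2 (h \<omega>) t i = ?F (Y \<omega>)" for \<omega>
    using assms(9) by (intro F_trans_cong) (auto simp: Y_def)
  have P: "prob_space ?P"
    using assms(5) by (intro prob_space_PiM prob_space_gauss_iso)
  have entries: "integrable ?P (\<lambda>y. y s k)" if "s < n" "k < d" for s k
    using assms(5) that by (intro integrable_PiM_gauss_iso_entry) auto
  have sym: "distr ?P ?P (compose {..<n} (compose {..<d} uminus)) = ?P"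
    using assms(5) by (intro PiM_gauss_iso_distr_uminus) auto
  have "integrable ?P ?F"
    by (rule integrable_F_trans[OF P sets_PiM_gauss_iso entries assms(9)])
  moreover have "integral\<^sup>L ?P ?F = (1/2) * (\<Sum>l<m. W2 i l * b1 l) + b2 i"
    by (rule integral_F_trans_of_symmetric[OF P sets_PiM_gauss_iso entries sym assms(9)])
  ultimately show ?thesis
    unfolding F_Y using integrable_distr_eq[OF Y measurable_F_trans] integral_distr[OF Y measurable_F_trans] law
    by simp
qed

end
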